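(* Let $p$ be a prime, $M>1$ an integer prime to $p$, $N>1$ an integer prime to $pM$, and let $\nu$ be the multiplicative order of $p$ in $(\mathbf{Z}/M)^\times$. Then for every integer $0\le d<M$ with $\gcd(d,M)=1$, $$\prod_{0\le j<\nu}\prod_{0\le k<N}\left\langle\Gamma_p\!\left(\frac{(p^jd)^\flat_M+kM}{MN}\right)\right\rangle=\prod_{0\le j<\nu}\left\langle\Gamma_p\!\left(\frac{(p^jd)^\flat_M}{M}\right)\right\rangle.$$
   Context: $\Gamma_p$ is Morita's $p$-adic Gamma function; $\omega$ is the Teichmüller character and $\langle x\rangle=x/\omega(x)$ for $x\in\mathbf{Z}_p^\times$. For $h>1$ and $a\in\mathbf{Z}$, $a^\flat_h$ is the unique integer in $[0,h)$ congruent to $a$ mod $h$. *)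

theory Defs
  imports "HOL-Number_Theory.Number_Theory"
begin

text \<open>p-adic integers are represented by their coherent sequences of residues:
  x :: nat => int, with x k the residue of x modulo p^k in [0, p^k).\<close>

definition padic_int :: "nat \<Rightarrow> (nat \<Rightarrow> int) \<Rightarrow> bool" where
  "padic_int p x \<longleftrightarrow> (\<forall>k. 0 \<le> x k \<and> x k < int p ^ k \<and> x (Suc k) mod int p ^ k = x k)"

text \<open>The p-adic number a/b (b prime to p).\<close>
definition padic_frac :: "nat \<Rightarrow> int \<Rightarrow> int \<Rightarrow> nat \<Rightarrow> int" where
  "padic_frac p a b = (\<lambda>k. THE r. 0 \<le> r \<and> r < int p ^ k \<and> [b * r = a] (mod int p ^ k))"

definition padic_mult :: "nat \<Rightarrow> (nat \<Rightarrow> int) \<Rightarrow> (nat \<Rightarrow> int) \<Rightarrow> nat \<Rightarrow> int" where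
  "padic_mult p x y = (\<lambda>k. (x k * y k) mod int p ^ k)"

definition padic_inv :: "nat \<Rightarrow> (nat \<Rightarrow> int) \<Rightarrow> nat \<Rightarrow> int" where
  "padic_inv p x = (\<lambda>k. THE r. 0 \<le> r \<and> r < int p ^ k \<and> [x k * r = 1] (mod int p ^ k))"

definition padic_prod :: "nat \<Rightarrow> ('a \<Rightarrow> nat \<Rightarrow> int) \<Rightarrow> 'a set \<Rightarrow> nat \<Rightarrow> int" where
  "padic_prod p f A = (\<lambda>k. (\<Prod>i\<in>A. f i k) mod int p ^ k)"

definition gamma_nat :: "nat \<Rightarrow> nat \<Rightarrow> int" where
  "gamma_nat p n = (-1) ^ n * (\<Prod>j\<in>{j \<in> {1..<n}. \<not> p dvd j}. int j)"

text \<open>Morita's Gamma_p on Z_p: the continuous extension, i.e. the limit of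
  Gamma_p(x_m) where x_m (in [0,p^m)) is x truncated mod p^m, which tends to x.\<close>
definition padic_gamma :: "nat \<Rightarrow> (nat \<Rightarrow> int) \<Rightarrow> nat \<Rightarrow> int" where
  "padic_gamma p x = (\<lambda>k. THE r. \<forall>\<^sub>F m in sequentially. gamma_nat p (nat (x m)) mod int p ^ k = r)"

text \<open>Teichmueller character on Z_p^x: for odd p, omega(x) = lim x^(p^m);
  for p = 2, omega(x) = +-1 with omega(x) = x mod 4.\<close>
definition teich :: "nat \<Rightarrow> (nat \<Rightarrow> int) \<Rightarrow> nat \<Rightarrow> int" where
  "teich p x = (if p = 2
     then (\<lambda>k. (if x 2 = 1 then 1 else -1) mod 2 ^ k)
     else (\<lambda>k. THE r. \<forall>\<^sub>F m in sequentially. (x k) ^ (p ^ m) mod int p ^ k = r))"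

text \<open>The projection <x> = x / omega(x).\<close>
definition padic_angle :: "nat \<Rightarrow> (nat \<Rightarrow> int) \<Rightarrow> nat \<Rightarrow> int" where
  "padic_angle p x = padic_mult p x (padic_inv p (teich p x))"

end

theory Submission
  imports Defs
begin

(* Fix a level k and work with integer representatives modulo a much larger power p^m.
   There Gamma_p((r + iM)/(MN)) and Gamma_p(r/M) are Morita's Gamma of residues, and the
   Gauss multiplication formula for Morita's Gamma on integers reads

     N^u(n) * prod_{i<N} Gamma((n + i)/N) = eps * Gamma(n)   (mod p^(m-1)),

   where u(n) counts the integers below n prime to p and eps = prod_{i<N} Gamma(i/N).
   Multiplying over the orbit r_j of d under x -> px in Z/M, with n_j the residue of r_j/M,
   the exponent U is the sum of u(n_j) = n_j - ceil(n_j/p); since ceil(n_j/p) = n_(j-1)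
   modulo p^(m-1), this sum telescopes and is divisible by p^(m-1).  The reflection formula Gamma(a) Gamma(1 - a) = +-1 gives eps^2 = +-1.
   Hence both N^U and eps^nu are fixed by the Teichmueller character, so they disappear
   after taking <.>. *)

lemma euler_theorem_int:
  fixes a :: int
  assumes "coprime a (int n)"
  shows "[a ^ totient n = 1] (mod int n)"
proof (cases "n \<le> 1")
  case True
  then show ?thesis
    using assms by (cases n) (auto simp: cong_def)
next
  case False
  then have "residues (int n)"
    by (simp add: residues_def)
  then show ?thesis
    using residues.euler_theorem[of "int n" a] assms by simp
qed

lemma euler_theorem_prime_power:
  fixes a :: int
  assumes "coprime a (int p)" "totient (p ^ j) dvd e"
  shows "[a ^ e = 1] (mod int p ^ j)"
proof -
  obtain t where t: "e = totient (p ^ j) * t"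
    using assms(2) by blast
  have "[a ^ totient (p ^ j) = 1] (mod int (p ^ j))"
    using assms(1) by (intro euler_theorem_int) simp
  then have "[(a ^ totient (p ^ j)) ^ t = 1 ^ t] (mod int (p ^ j))"
    by (rule cong_pow)
  then show ?thesis
    by (simp add: t power_mult)
qed

lemma prime_ne_2_odd: "prime (p::nat) \<Longrightarrow> p \<noteq> 2 \<Longrightarrow> odd p"
  using prime_odd_nat[of p] prime_ge_2_nat[of p] by fastforce

lemma prime_power_coprime_cong:
  fixes a b :: int
  assumes "k \<ge> 1" "[a = b] (mod int p ^ k)" "coprime b (int p)"
  shows "coprime a (int p)"
  using cong_imp_coprime[OF cong_sym[OF assms(2)]] assms(1,3) by simp

lemma prod_cong_sign:
  fixes f g :: "'a \<Rightarrow> int"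
  assumes "\<And>i. i \<in> A \<Longrightarrow> \<exists>s. (s = 1 \<or> s = -1) \<and> [f i = s * g i] (mod n)"
  shows "\<exists>s. (s = 1 \<or> s = -1) \<and> [prod f A = s * prod g A] (mod n)"
  using assms
proof (induction A rule: infinite_finite_induct)
  case (insert x F)
  then obtain s where s: "s = 1 \<or> s = -1" "[prod f F = s * prod g F] (mod n)"
    by blast
  from insert obtain t where t: "t = 1 \<or> t = -1" "[f x = t * g x] (mod n)"
    by blast
  have "[f x * prod f F = (t * g x) * (s * prod g F)] (mod n)"
    using s t cong_mult by blast
  then have "[prod f (insert x F) = (t * s) * prod g (insert x F)] (mod n)"
    using insert by (simp add: algebra_simps)
  moreover have "t * s = 1 \<or> t * s = -1"
    using s t by auto
  ultimately show ?case
    by blast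
qed (auto intro: exI[of _ 1])

lemma cong_pow_prime_lift:
  fixes x y :: int
  assumes "j \<ge> 1" "[x = y] (mod int p ^ j)"
  shows "[x ^ p = y ^ p] (mod int p ^ Suc j)"
proof -
  have xy: "[x = y] (mod int p)"
    using cong_dvd_modulus[OF assms(2), of "int p"] assms(1) by (simp add: dvd_power)
  have "[(\<Sum>i<p. y ^ (p - Suc i) * x ^ i) = (\<Sum>i<p. y ^ (p - Suc i) * y ^ i)] (mod int p)"
    by (intro cong_sum cong_scalar_left cong_pow xy)
  moreover have "(\<Sum>i<p. y ^ (p - Suc i) * y ^ i) = int p * y ^ (p - 1)"
  proof -
    have "y ^ (p - Suc i) * y ^ i = y ^ (p - 1)" if "i < p" for i
      using that by (simp flip: power_add)
    then show ?thesis
      by simp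
  qed
  ultimately have "int p dvd (\<Sum>i<p. y ^ (p - Suc i) * x ^ i)"
    by (simp add: cong_dvd_iff)
  moreover have "int p ^ j dvd x - y"
    using assms(2) by (simp add: cong_iff_dvd_diff)
  ultimately have "int p ^ Suc j dvd (x - y) * (\<Sum>i<p. y ^ (p - Suc i) * x ^ i)"
    using mult_dvd_mono by (fastforce simp: mult.commute)
  then show ?thesis
    by (simp add: cong_iff_dvd_diff power_diff_sumr2)
qed

subsection \<open>Rational numbers in \<open>\<int>\<^sub>p\<close>\<close>

lemma padic_frac_unique:
  fixes a b :: int
  assumes "prime p" "coprime b (int p)"
    and "0 \<le> r" "r < int p ^ k" "[b * r = a] (mod int p ^ k)"
    and "0 \<le> s" "s < int p ^ k" "[b * s = a] (mod int p ^ k)"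
  shows "r = s"
proof -
  have "[b * r = b * s] (mod int p ^ k)"
    using assms by (metis cong_sym cong_trans)
  then have "[r = s] (mod int p ^ k)"
    using assms(2) cong_mult_lcancel[of b "int p ^ k"] by simp
  then show ?thesis
    using assms cong_less_imp_eq_int by blast
qed

lemma padic_frac_eqI:
  fixes a b :: int
  assumes "prime p" "coprime b (int p)"
    and "0 \<le> r" "r < int p ^ k" "[b * r = a] (mod int p ^ k)"
  shows "padic_frac p a b k = r"
  unfolding padic_frac_def
  by (rule the_equality) (use assms padic_frac_unique in blast)+

lemma padic_frac_props:
  fixes a b :: int
  assumes "prime p" "coprime b (int p)"
  shows "0 \<le> padic_frac p a b k" "padic_frac p a b k < int p ^ k"
    and "[b * padic_frac p a b k = a] (mod int p ^ k)"
proof -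
  have c: "coprime b (int p ^ k)"
    using assms by simp
  obtain x where x: "[b * x = 1] (mod int p ^ k)"
    using cong_solve_coprime_int[OF c] by blast
  define r where "r = (x * a) mod int p ^ k"
  have "[b * r = b * (x * a)] (mod int p ^ k)"
    unfolding r_def by (simp add: cong_def mod_mult_right_eq)
  also have "b * (x * a) = (b * x) * a"
    by (simp add: algebra_simps)
  also have "[(b * x) * a = 1 * a] (mod int p ^ k)"
    using x by (rule cong_scalar_right)
  finally have "[b * r = a] (mod int p ^ k)"
    by simp
  moreover have "0 \<le> r" "r < int p ^ k"
    using assms prime_gt_0_nat by (auto simp: r_def)
  ultimately show "0 \<le> padic_frac p a b k" "padic_frac p a b k < int p ^ k"
    "[b * padic_frac p a b k = a] (mod int p ^ k)"
    using padic_frac_eqI[OF assms] by auto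
qed

lemma padic_frac_mod_prime_power:
  fixes a b :: int
  assumes "prime p" "coprime b (int p)" "k \<le> K"
  shows "padic_frac p a b K mod int p ^ k = padic_frac p a b k"
proof (rule padic_frac_eqI[OF assms(1,2), symmetric])
  have "[b * (padic_frac p a b K mod int p ^ k) = b * padic_frac p a b K] (mod int p ^ k)"
    by (simp add: cong_def mod_mult_right_eq)
  moreover have "[b * padic_frac p a b K = a] (mod int p ^ k)"
    using padic_frac_props(3)[OF assms(1,2)] assms(3)
    by (meson cong_dvd_modulus le_imp_power_dvd)
  ultimately show "[b * (padic_frac p a b K mod int p ^ k) = a] (mod int p ^ k)"
    by (rule cong_trans)
qed (use assms prime_gt_0_nat in auto)

subsection \<open>Morita's \<open>\<Gamma>\<^sub>p\<close> on the natural numbers\<close>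

definition unit_or_one :: "nat \<Rightarrow> nat \<Rightarrow> int" where
  "unit_or_one p j = (if \<not> p dvd j then int j else 1)"

definition unit_fact :: "nat \<Rightarrow> nat \<Rightarrow> int" where
  "unit_fact p n = (\<Prod>j<n. unit_or_one p j)"

lemma gamma_nat_eq_unit_fact: "gamma_nat p n = (-1) ^ n * unit_fact p n"
proof -
  have "{j \<in> {1..<n}. \<not> p dvd j} = {j \<in> {..<n}. \<not> p dvd j}"
    by (auto simp: Suc_le_eq intro: Nat.gr0I)
  moreover have "(\<Prod>j\<in>{j \<in> {..<n}. \<not> p dvd j}. int j) = unit_fact p n"
    unfolding unit_fact_def unit_or_one_def by (rule prod.inter_filter) simp
  ultimately show ?thesis
    by (simp add: gamma_nat_def)
qed

lemma gamma_nat_Suc: "gamma_nat p (Suc n) = - unit_or_one p n * gamma_nat p n"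
  by (simp add: gamma_nat_eq_unit_fact unit_fact_def)

lemma coprime_unit_or_one: "prime p \<Longrightarrow> coprime (unit_or_one p j) (int p)"
  unfolding unit_or_one_def
  by (metis (mono_tags, lifting) coprimeI coprime_commute of_nat_dvd_iff
    prime_imp_coprime prime_nat_int_transfer)

lemma coprime_unit_fact: "prime p \<Longrightarrow> coprime (unit_fact p n) (int p)"
  unfolding unit_fact_def by (rule prod_coprime_left) (simp add: coprime_unit_or_one)

lemma coprime_gamma_nat: "prime p \<Longrightarrow> coprime (gamma_nat p n) (int p)"
  by (simp add: gamma_nat_eq_unit_fact coprime_unit_fact)

lemma unit_or_one_add_cong:
  assumes "p dvd L"
  shows "[unit_or_one p (n + L) = unit_or_one p n] (mod int L)"
  using assms by (auto simp: unit_or_one_def cong_def dvd_add_left_iff)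

text \<open>The product of the units in a window of length \<open>L = p\<^sup>m\<close> does not depend on
  the position of the window modulo \<open>L\<close>.\<close>

lemma unit_fact_add_prime_power:
  assumes "prime p" "m \<ge> 1"
  shows "[unit_fact p (n + p ^ m) = unit_fact p n * unit_fact p (p ^ m)] (mod int p ^ m)"
proof -
  define L where "L = p ^ m"
  define W where "W n = (\<Prod>j\<in>{n..<n + L}. unit_or_one p j)" for n
  have pL: "p dvd L"
    using assms(2) by (simp add: L_def dvd_power)
  have "[W (Suc n) = W n] (mod int L)" for n
  proof -
    have "W (Suc n) * unit_or_one p n = (\<Prod>j\<in>{n..<Suc (n + L)}. unit_or_one p j)"
      by (simp add: W_def prod.atLeast_Suc_lessThan mult.commute)
    also have "\<dots> = W n * unit_or_one p (n + L)"
      by (simp add: W_def)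
    also have "[W n * unit_or_one p (n + L) = W n * unit_or_one p n] (mod int L)"
      using unit_or_one_add_cong[OF pL] by (rule cong_scalar_left)
    finally show ?thesis
      using coprime_unit_or_one[OF assms(1), of n] cong_mult_rcancel[of "unit_or_one p n" "int L"]
      by (simp add: L_def)
  qed
  then have "[W n = W 0] (mod int L)"
    by (induction n) (auto intro: cong_trans)
  moreover have "unit_fact p (n + L) = unit_fact p n * W n"
    unfolding unit_fact_def W_def lessThan_atLeast0 by (rule prod.atLeastLessThan_concat[symmetric]) auto
  moreover have "W 0 = unit_fact p L"
    by (simp add: W_def unit_fact_def lessThan_atLeast0)
  ultimately have "[unit_fact p (n + L) = unit_fact p n * unit_fact p L] (mod int L)"
    by (metis cong_scalar_left)
  then show ?thesis
    by (simp add: L_def)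
qed

lemma unit_fact_mult_prime_power:
  assumes "prime p" "m \<ge> 1"
  shows "[unit_fact p (i * p ^ m) = unit_fact p (p ^ m) ^ i] (mod int p ^ m)"
proof (induction i)
  case (Suc i)
  have "[unit_fact p (i * p ^ m + p ^ m) = unit_fact p (i * p ^ m) * unit_fact p (p ^ m)] (mod int p ^ m)"
    using unit_fact_add_prime_power[OF assms] .
  also have "[unit_fact p (i * p ^ m) * unit_fact p (p ^ m) = unit_fact p (p ^ m) ^ i * unit_fact p (p ^ m)] (mod int p ^ m)"
    using Suc by (rule cong_scalar_right)
  finally show ?case
    by (simp add: add.commute mult.commute)
qed (simp add: unit_fact_def)

lemma unit_fact_prime: "prime p \<Longrightarrow> unit_fact p p = fact (p - 1)"
proof -
  assume p: "prime p"
  have "unit_fact p p = (\<Prod>j\<in>{1..<p}. unit_or_one p j)"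
    unfolding unit_fact_def lessThan_atLeast0 using p prime_gt_0_nat
    by (simp add: prod.atLeast_Suc_lessThan unit_or_one_def)
  also have "\<dots> = (\<Prod>j\<in>{1..p - 1}. int j)"
    using p prime_gt_0_nat
    by (intro prod.cong) (auto simp: unit_or_one_def dest: dvd_imp_le)
  finally show ?thesis
    by (simp add: fact_prod)
qed

lemma unit_fact_prime_power:
  assumes "prime p"
  shows "[unit_fact p (p ^ Suc j) = (if p = 2 then 1 else -1)] (mod int p ^ j)"
proof -
  define c :: int where "c = (if p = 2 then 1 else -1)"
  have c_pow: "c ^ p = c"
    using prime_ne_2_odd[OF assms] by (cases "p = 2") (simp_all add: c_def)
  have "[unit_fact p (p ^ Suc j) = c] (mod int p ^ j)"
  proof (induction j)
    case (Suc j)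
    have "[unit_fact p (p ^ Suc (Suc j)) = unit_fact p (p ^ Suc j) ^ p] (mod int p ^ Suc j)"
      using unit_fact_mult_prime_power[OF assms, of "Suc j" p] by (simp add: mult.commute)
    also have "[unit_fact p (p ^ Suc j) ^ p = c ^ p] (mod int p ^ Suc j)"
    proof (cases "j = 0")
      case True
      have "[unit_fact p p = -1] (mod int p)"
        using unit_fact_prime[OF assms] wilson_theorem[OF assms] by simp
      moreover have "[-1 = c] (mod int p)"
        by (cases "p = 2") (simp_all add: c_def cong_def)
      ultimately have "[unit_fact p p = c] (mod int p)"
        by (rule cong_trans)
      then show ?thesis
        using True cong_pow by simp
    next
      case False
      then show ?thesis
        using Suc.IH by (intro cong_pow_prime_lift) simp_all
    qed
    finally show ?case
      by (simp add: c_pow)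
  qed (simp add: cong_def)
  then show ?thesis
    by (simp add: c_def)
qed

lemma gamma_nat_add_prime_power:
  assumes "prime p"
  shows "[gamma_nat p (n + p ^ Suc j) = gamma_nat p n] (mod int p ^ j)"
proof -
  define L where "L = p ^ Suc j"
  define c :: int where "c = (if p = 2 then 1 else -1)"
  have "[unit_fact p (n + L) = unit_fact p n * unit_fact p L] (mod int p ^ j)"
    using unit_fact_add_prime_power[OF assms, of "Suc j" n] le_imp_power_dvd[of j "Suc j" "int p"]
    unfolding L_def by (simp add: cong_dvd_modulus)
  also have "[unit_fact p n * unit_fact p L = unit_fact p n * c] (mod int p ^ j)"
    using unit_fact_prime_power[OF assms] by (intro cong_scalar_left) (simp add: L_def c_def)
  finally have "[(-1) ^ (n + L) * unit_fact p (n + L) = (-1) ^ (n + L) * (unit_fact p n * c)] (mod int p ^ j)"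
    by (rule cong_scalar_left)
  moreover have "(-1::int) ^ L * c = 1"
    using prime_ne_2_odd[OF assms] by (cases "p = 2") (simp_all add: c_def L_def)
  then have "(-1::int) ^ (n + L) * (unit_fact p n * c) = gamma_nat p n"
    by (simp add: gamma_nat_eq_unit_fact power_add algebra_simps)
  ultimately have "[gamma_nat p (n + L) = gamma_nat p n] (mod int p ^ j)"
    by (simp only: gamma_nat_eq_unit_fact)
  then show ?thesis
    by (simp only: L_def)
qed

lemma gamma_nat_cong:
  assumes "prime p" "[a = b] (mod p ^ Suc j)"
  shows "[gamma_nat p a = gamma_nat p b] (mod int p ^ j)"
proof -
  have shift: "[gamma_nat p (a + t * p ^ Suc j) = gamma_nat p a] (mod int p ^ j)" for a t
  proof (induction t)
    case (Suc t)
    then show ?case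
      using gamma_nat_add_prime_power[OF assms(1), of "a + t * p ^ Suc j" j]
      by (metis (no_types, lifting) add.assoc add.commute mult_Suc cong_trans)
  qed simp
  show ?thesis
  proof (cases "a \<le> b")
    case True
    then obtain t where "b = a + t * p ^ Suc j"
      using assms(2) by (metis mod_eq_nat1E mult.commute cong_def)
    then show ?thesis
      using shift cong_sym by metis
  next
    case False
    then obtain t where "a = b + t * p ^ Suc j"
      using assms(2) by (metis mod_eq_nat1E mult.commute cong_def nat_le_linear)
    then show ?thesis
      using shift by metis
  qed
qed

lemma the_eventually_eq:
  assumes "\<forall>\<^sub>F m in sequentially. f m = v"
  shows "(THE r. \<forall>\<^sub>F m in sequentially. f m = r) = v"
proof (rule the_equality)
  fix r
  assume "\<forall>\<^sub>F m in sequentially. f m = r"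
  with assms have "\<forall>\<^sub>F m in sequentially. f m = r \<and> f m = v"
    by (rule eventually_conj[rotated])
  then obtain m where "f m = r" "f m = v"
    unfolding eventually_sequentially by blast
  then show "r = v"
    by simp
qed (fact assms)

definition gamma_approx :: "nat \<Rightarrow> int \<Rightarrow> int \<Rightarrow> nat \<Rightarrow> int" where
  "gamma_approx p a b m = gamma_nat p (nat (padic_frac p a b m))"

lemma coprime_gamma_approx: "prime p \<Longrightarrow> coprime (gamma_approx p a b m) (int p)"
  by (simp add: gamma_approx_def coprime_gamma_nat)

lemma padic_gamma_padic_frac:
  assumes "prime p" "coprime b (int p)" "Suc k \<le> K"
  shows "padic_gamma p (padic_frac p a b) k = gamma_approx p a b K mod int p ^ k"
proof -
  define x where "x = padic_frac p a b"
  have "[gamma_nat p (nat (x m)) = gamma_nat p (nat (x K))] (mod int p ^ k)"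
    if "K \<le> m" for m
  proof -
    have "[x m = x K] (mod int p ^ K)"
      using padic_frac_mod_prime_power[OF assms(1,2) that]
        padic_frac_mod_prime_power[OF assms(1,2) order_refl]
      unfolding cong_def x_def by metis
    moreover have "x m \<ge> 0" "x K \<ge> 0"
      using padic_frac_props(1)[OF assms(1,2)] by (simp_all add: x_def)
    ultimately have "[int (nat (x m)) = int (nat (x K))] (mod int (p ^ K))"
      by simp
    then have "[nat (x m) = nat (x K)] (mod p ^ K)"
      by (rule cong_int_iff[THEN iffD1])
    moreover have "p ^ Suc k dvd p ^ K"
      using assms(3) by (rule le_imp_power_dvd)
    ultimately have "[nat (x m) = nat (x K)] (mod p ^ Suc k)"
      by (rule cong_dvd_modulus_nat)
    then show ?thesis
      by (rule gamma_nat_cong[OF assms(1)])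
  qed
  then have "\<forall>\<^sub>F m in sequentially. gamma_nat p (nat (x m)) mod int p ^ k
               = gamma_approx p a b K mod int p ^ k"
    unfolding eventually_sequentially gamma_approx_def x_def cong_def by blast
  then show ?thesis
    unfolding padic_gamma_def x_def by (rule the_eventually_eq)
qed

subsection \<open>The Teichm\<uuml>ller character modulo \<open>p\<^sup>k\<close>\<close>

lemma pow_prime_power_stable:
  fixes w :: int
  assumes "prime p" "coprime w (int p)" "k \<le> e"
  shows "[w ^ (p ^ e) = w ^ (p ^ k)] (mod int p ^ k)"
  using assms(3)
proof (induction e rule: dec_induct)
  case (step e)
  have "totient (p ^ Suc e) = p ^ e * (p - 1)"
    using totient_prime_power_Suc[OF assms(1)] .
  then have exp: "p ^ Suc e = p ^ e + totient (p ^ Suc e)"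
    using prime_gt_0_nat[OF assms(1)] by (simp add: algebra_simps)
  have "[w ^ totient (p ^ Suc e) = 1] (mod int p ^ Suc e)"
    using assms(2) by (rule euler_theorem_prime_power) simp
  then have "[w ^ (p ^ e) * w ^ totient (p ^ Suc e) = w ^ (p ^ e) * 1] (mod int p ^ Suc e)"
    by (rule cong_scalar_left)
  then have "[w ^ (p ^ Suc e) = w ^ (p ^ e)] (mod int p ^ Suc e)"
    by (subst exp) (simp add: power_add)
  then have "[w ^ (p ^ Suc e) = w ^ (p ^ e)] (mod int p ^ k)"
    using le_imp_power_dvd[of k "Suc e" "int p"] step.hyps by (simp add: cong_dvd_modulus)
  then show ?case
    using step.IH by (rule cong_trans)
qed simp

lemma teich_odd_prime:
  assumes "prime p" "p \<noteq> 2" "coprime (y k) (int p)" "k \<le> e"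
  shows "teich p y k = (y k) ^ (p ^ e) mod int p ^ k"
proof -
  have "\<forall>\<^sub>F m in sequentially. (y k) ^ (p ^ m) mod int p ^ k = (y k) ^ (p ^ e) mod int p ^ k"
    unfolding eventually_sequentially
    using pow_prime_power_stable[OF assms(1,3)] assms(4) unfolding cong_def
    by (metis order.trans)
  then show ?thesis
    using assms(2) unfolding teich_def by (simp add: the_eventually_eq)
qed

lemma padic_inv_cong:
  assumes "prime p" "coprime (t k) (int p)"
  shows "[t k * padic_inv p t k = 1] (mod int p ^ k)"
proof -
  have "padic_inv p t k = padic_frac p 1 (t k) k"
    by (simp add: padic_inv_def padic_frac_def)
  then show ?thesis
    using padic_frac_props(3)[OF assms] by simp
qed

text \<open>An integer representative of \<open>\<omega>(z)\<close> modulo \<open>p\<^sup>k\<close>.  Any exponent \<open>p\<^sup>e\<close> with \<open>e \<ge> k\<close>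
  would do for odd \<open>p\<close>; the even exponent \<open>2k\<close> makes \<open>p\<^sup>2\<^sup>k \<equiv> 1 (mod 4)\<close>, which is
  what \<open>teich_rep_fixed_of_square\<close> needs.\<close>

definition teich_rep :: "nat \<Rightarrow> nat \<Rightarrow> int \<Rightarrow> int" where
  "teich_rep p k z = (if p = 2 then (if z mod 4 = 1 then 1 else -1) else z ^ (p ^ (2 * k)))"

lemma teich_cong_teich_rep:
  assumes "prime p" "k \<ge> 1" "coprime z (int p)" "[y k = z] (mod int p ^ k)"
    and "p = 2 \<Longrightarrow> y 2 = z mod 4"
  shows "[teich p y k = teich_rep p k z] (mod int p ^ k)"
proof (cases "p = 2")
  case True
  then show ?thesis
    using assms(5) by (simp add: teich_def teich_rep_def cong_def)
next
  case False
  have "coprime (y k) (int p)"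
    using prime_power_coprime_cong[OF assms(2,4,3)] .
  then have "teich p y k = (y k) ^ (p ^ (2 * k)) mod int p ^ k"
    using teich_odd_prime[OF assms(1) False] by simp
  moreover have "[(y k) ^ (p ^ (2 * k)) = z ^ (p ^ (2 * k))] (mod int p ^ k)"
    using assms(4) by (rule cong_pow)
  ultimately show ?thesis
    using False by (simp add: teich_rep_def cong_def)
qed

lemma coprime_teich_rep: "coprime z (int p) \<Longrightarrow> coprime (teich_rep p k z) (int p)"
  by (simp add: teich_rep_def)

lemma padic_angle_teich_rep:
  assumes "prime p" "k \<ge> 1" "coprime z (int p)" "[y k = z] (mod int p ^ k)"
    and "p = 2 \<Longrightarrow> y 2 = z mod 4"
  shows "[padic_angle p y k * teich_rep p k z = z] (mod int p ^ k)"
proof -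
  define t where "t = teich p y"
  define r where "r = padic_inv p t k"
  have t: "[t k = teich_rep p k z] (mod int p ^ k)"
    unfolding t_def using teich_cong_teich_rep[OF assms] .
  have "coprime (t k) (int p)"
    using prime_power_coprime_cong[OF assms(2) t coprime_teich_rep[OF assms(3)]] .
  then have r: "[t k * r = 1] (mod int p ^ k)"
    unfolding r_def using padic_inv_cong[OF assms(1)] by blast
  have "[padic_angle p y k = y k * r] (mod int p ^ k)"
    by (simp add: padic_angle_def padic_mult_def r_def t_def cong_def)
  then have "[padic_angle p y k * teich_rep p k z = (y k * r) * t k] (mod int p ^ k)"
    using cong_mult[OF _ cong_sym[OF t]] by blast
  also have "(y k * r) * t k = y k * (t k * r)"
    by simp
  also have "[y k * (t k * r) = y k * 1] (mod int p ^ k)"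
    using r by (rule cong_scalar_left)
  also have "[y k * 1 = z] (mod int p ^ k)"
    using assms(4) by simp
  finally show ?thesis .
qed

lemma teich_rep_mult:
  assumes "coprime z (int p)" "coprime w (int p)"
  shows "teich_rep p k (z * w) = teich_rep p k z * teich_rep p k w"
proof (cases "p = 2")
  case True
  then have "odd z" "odd w"
    using assms by (simp_all add: coprime_right_2_iff_odd)
  then have "z mod 4 = 1 \<or> z mod 4 = 3" "w mod 4 = 1 \<or> w mod 4 = 3"
    by presburger+
  moreover have "(z * w) mod 4 = ((z mod 4) * (w mod 4)) mod 4"
    by (simp add: mod_mult_eq)
  ultimately show ?thesis
    using True by (auto simp: teich_rep_def)
qed (simp add: teich_rep_def power_mult_distrib)

lemma teich_rep_prod:
  assumes "\<And>i. i \<in> A \<Longrightarrow> coprime (f i) (int p)"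
  shows "teich_rep p k (prod f A) = (\<Prod>i\<in>A. teich_rep p k (f i))"
  using assms
proof (induction A rule: infinite_finite_induct)
  case (insert x F)
  have "coprime (prod f F) (int p)"
    using insert by (simp add: prod_coprime_left)
  then show ?case
    using insert teich_rep_mult by simp
qed (simp_all add: teich_rep_def)

lemma teich_rep_power:
  assumes "coprime z (int p)"
  shows "teich_rep p k (z ^ n) = teich_rep p k z ^ n"
  using teich_rep_prod[of "{..<n}" "\<lambda>_. z" p k] assms by simp

lemma teich_rep_cong:
  assumes "[z = w] (mod int p ^ (k + 2))"
  shows "[teich_rep p k z = teich_rep p k w] (mod int p ^ k)"
proof (cases "p = 2")
  case True
  then have "(4::int) dvd int p ^ (k + 2)"
    by (simp add: power_add)
  then have "[z = w] (mod 4)"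
    using assms cong_dvd_modulus by blast
  then show ?thesis
    using True by (simp add: teich_rep_def cong_def)
next
  case False
  have "[z = w] (mod int p ^ k)"
    using assms by (metis cong_modulus_mult power_add)
  then show ?thesis
    using False by (simp add: teich_rep_def cong_pow)
qed

lemma sub1_dvd_power_sub1: "(p::nat) - 1 dvd p ^ n - 1"
proof (cases "p = 0")
  case False
  then have "[p = 1] (mod p - 1)"
    by (simp add: cong_def le_mod_geq)
  then have "[p ^ n = 1] (mod p - 1)"
    using cong_pow by fastforce
  then show ?thesis
    by (rule cong_to_1_nat)
qed (cases n; simp)

lemma teich_rep_power_fixed:
  fixes w :: int
  assumes "prime p" "k \<ge> 1" "coprime w (int p)" "p ^ k dvd e"
  shows "[teich_rep p k (w ^ e) = w ^ e] (mod int p ^ k)"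
proof -
  have totient: "totient (p ^ k) = p ^ (k - 1) * (p - 1)"
    using totient_prime_power[OF assms(1,2)[unfolded One_nat_def less_eq_Suc_le[symmetric]]] .
  have pe: "p ^ (k - 1) dvd e"
    using assms(4) by (rule dvd_trans[rotated]) (simp add: le_imp_power_dvd)
  show ?thesis
  proof (cases "p = 2")
    case True
    have "[w ^ e = 1] (mod int p ^ 2)"
      using assms(3,4) True \<open>k \<ge> 1\<close> totient_prime_power_Suc[OF assms(1), of 1]
      by (intro euler_theorem_prime_power) (auto intro: dvd_trans[OF dvd_power[of k 2]])
    then have "teich_rep p k (w ^ e) = 1"
      using True by (simp add: teich_rep_def cong_def)
    moreover have "totient (p ^ k) dvd e"
      using pe totient True by simp
    then have "[w ^ e = 1] (mod int p ^ k)"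
      using assms(3) by (rule euler_theorem_prime_power[rotated])
    ultimately show ?thesis
      by (simp add: cong_sym)
  next
    case False
    have "p ^ (2 * k) \<ge> 1"
      using prime_ge_1_nat[OF assms(1)] by simp
    then have "teich_rep p k (w ^ e) = w ^ e * w ^ (e * (p ^ (2 * k) - 1))"
      using False by (simp add: teich_rep_def flip: power_add power_mult) (simp add: algebra_simps)
    moreover have "totient (p ^ k) dvd e * (p ^ (2 * k) - 1)"
      unfolding totient using pe sub1_dvd_power_sub1 by (rule mult_dvd_mono)
    then have "[w ^ (e * (p ^ (2 * k) - 1)) = 1] (mod int p ^ k)"
      using assms(3) by (rule euler_theorem_prime_power[rotated])
    ultimately show ?thesis
      using cong_scalar_left[of _ 1 _ "w ^ e"] by simp
  qed
qed

lemma odd_square_cong_one_two_power: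
  fixes e :: int
  assumes "odd e" "[e ^ 2 = 1] (mod 2 ^ Suc k)"
  shows "[e = 1] (mod 2 ^ k) \<or> [e = -1] (mod 2 ^ k)"
proof (cases k)
  case (Suc j)
  obtain a where a: "e = 2 * a + 1"
    using assms(1) by (metis oddE)
  have "(4::int) * 2 ^ j dvd 4 * (a * (a + 1))"
    using assms(2) Suc by (simp add: cong_iff_dvd_diff a power2_eq_square algebra_simps)
  then have dvd: "(2::int) ^ j dvd a * (a + 1)"
    by simp
  show ?thesis
  proof (cases "even a")
    case True
    then have "(2::int) ^ j dvd a"
      using dvd by (simp add: coprime_dvd_mult_left_iff)
    then have "2 * 2 ^ j dvd e - 1"
      by (simp add: a)
    then show ?thesis
      using Suc by (simp add: cong_iff_dvd_diff)
  next
    case False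
    then have "(2::int) ^ j dvd a + 1"
      using dvd by (simp add: coprime_dvd_mult_right_iff)
    then have "2 * 2 ^ j dvd 2 * (a + 1)"
      by (rule mult_dvd_mono[OF dvd_refl])
    then have "2 * 2 ^ j dvd e + 1"
      by (simp add: a algebra_simps)
    then show ?thesis
      using Suc by (simp add: cong_iff_dvd_diff)
  qed
qed simp

lemma teich_rep_fixed_of_square:
  fixes e s :: int
  assumes "prime p" "k \<ge> 1" "coprime e (int p)" "[e ^ 2 = s] (mod int p ^ Suc k)" "s = 1 \<or> s = -1"
  shows "[teich_rep p k e = e] (mod int p ^ k)"
proof (cases "p = 2")
  case True
  then have "odd e"
    using assms(3) by (simp add: coprime_right_2_iff_odd)
  then have "[e ^ 2 = 1] (mod 4)"
    by (auto elim!: oddE simp: cong_iff_dvd_diff power2_eq_square algebra_simps)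
  moreover have "[e ^ 2 = s] (mod 4)"
    using assms(2,4) True le_imp_power_dvd[of 2 "Suc k" "2::int"] by (simp add: cong_dvd_modulus)
  ultimately have "s = 1"
    using assms(5) by (auto simp: cong_def)
  then have pm: "[e = 1] (mod 2 ^ k) \<or> [e = -1] (mod 2 ^ k)"
    using odd_square_cong_one_two_power[OF \<open>odd e\<close>] assms(4) True by simp
  show ?thesis
  proof (cases "k = 1")
    case True
    then show ?thesis
      using \<open>odd e\<close> \<open>p = 2\<close> by (auto simp: teich_rep_def cong_def odd_iff_mod_2_eq_one)
  next
    case False
    then have four: "(4::int) dvd 2 ^ k"
      using assms(2) le_imp_power_dvd[of 2 k "2::int"] by simp
    from pm show ?thesis
    proof
      assume e: "[e = 1] (mod 2 ^ k)"
      then have "[e = 1] (mod 4)"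
        using four cong_dvd_modulus by blast
      then have "teich_rep p k e = 1"
        using \<open>p = 2\<close> by (simp add: teich_rep_def cong_def)
      then show ?thesis
        using e \<open>p = 2\<close> by (simp add: cong_sym)
    next
      assume e: "[e = -1] (mod 2 ^ k)"
      then have "[e = -1] (mod 4)"
        using four cong_dvd_modulus by blast
      then have "teich_rep p k e = -1"
        using \<open>p = 2\<close> by (simp add: teich_rep_def cong_def)
      then show ?thesis
        using e \<open>p = 2\<close> by (simp add: cong_sym)
    qed
  qed
next
  case False
  have "[e ^ 2 = s] (mod int p ^ k)"
    using assms(4) le_imp_power_dvd[of k "Suc k" "int p"] by (simp add: cong_dvd_modulus)
  then have "[(e ^ 2) ^ 2 = s ^ 2] (mod int p ^ k)"
    by (rule cong_pow)
  then have e4: "[e ^ 4 = 1] (mod int p ^ k)"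
    using assms(5) by (auto simp: power_mult[symmetric])
  have "odd p"
    using prime_ne_2_odd[OF assms(1) False] .
  then obtain q where "p = 2 * q + 1"
    by (rule oddE)
  then have "p ^ 2 = 4 * (q * q + q) + 1"
    by (simp add: power2_eq_square algebra_simps)
  then have "[p ^ 2 = 1] (mod 4)"
    by (simp add: cong_def)
  then have "[p ^ (2 * k) = 1] (mod 4)"
    using cong_pow[of "p ^ 2" 1 4 k] by (simp add: power_mult)
  then obtain t where "p ^ (2 * k) = 1 + 4 * t"
    using prime_ge_1_nat[OF assms(1)]
    by (metis cong_to_1_nat dvdE le_add_diff_inverse one_le_power)
  then have "teich_rep p k e = e * (e ^ 4) ^ t"
    using False by (simp add: teich_rep_def power_add power_mult)
  moreover have "[e * (e ^ 4) ^ t = e * 1 ^ t] (mod int p ^ k)"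
    using e4 by (intro cong_scalar_left cong_pow)
  ultimately show ?thesis
    by simp
qed

lemma padic_angle_gamma_approx:
  assumes "prime p" "coprime b (int p)" "k \<ge> 1" "k + 2 \<le> m"
  shows "[padic_angle p (padic_gamma p (padic_frac p a b)) k * teich_rep p k (gamma_approx p a b m)
          = gamma_approx p a b m] (mod int p ^ k)"
proof (rule padic_angle_teich_rep[OF assms(1,3) coprime_gamma_approx[OF assms(1)]])
  show "[padic_gamma p (padic_frac p a b) k = gamma_approx p a b m] (mod int p ^ k)"
    using padic_gamma_padic_frac[OF assms(1,2), of k m] assms(4) by (simp add: cong_def)
  show "padic_gamma p (padic_frac p a b) 2 = gamma_approx p a b m mod 4" if "p = 2"
    using padic_gamma_padic_frac[OF assms(1,2), of 2 m] assms(3,4) that by simp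
qed

lemma prod_teich_rep_quotient:
  assumes "\<And>i. i \<in> I \<Longrightarrow> [A i * teich_rep p k (x i) = x i] (mod n)"
    and "\<And>i. i \<in> I \<Longrightarrow> coprime (x i) (int p)"
  shows "[prod A I * teich_rep p k (prod x I) = prod x I] (mod n)"
proof -
  have "[(\<Prod>i\<in>I. A i * teich_rep p k (x i)) = prod x I] (mod n)"
    using assms(1) by (rule cong_prod)
  then show ?thesis
    using assms(2) by (simp add: teich_rep_prod prod.distrib)
qed

lemma angle_eq_of_cong:
  fixes A B x y a b :: int
  assumes "[A * teich_rep p k x = x] (mod int p ^ k)" "[B * teich_rep p k y = y] (mod int p ^ k)"
    and "[a * x = b * y] (mod int p ^ (k + 2))"
    and "[teich_rep p k a = a] (mod int p ^ k)" "[teich_rep p k b = b] (mod int p ^ k)"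
    and "coprime a (int p)" "coprime b (int p)" "coprime x (int p)" "coprime y (int p)"
  shows "[A = B] (mod int p ^ k)"
proof -
  define X where "X = teich_rep p k x"
  define Y where "Y = teich_rep p k y"
  have XY: "coprime X (int p)" "coprime Y (int p)"
    unfolding X_def Y_def using assms(8,9) by (simp_all add: coprime_teich_rep)
  have xy: "[a * x = b * y] (mod int p ^ k)"
    using assms(3) le_imp_power_dvd[of k "k + 2" "int p"] by (simp add: cong_dvd_modulus)
  have "[teich_rep p k (a * x) = teich_rep p k (b * y)] (mod int p ^ k)"
    using assms(3) by (rule teich_rep_cong)
  then have "[teich_rep p k a * X = teich_rep p k b * Y] (mod int p ^ k)"
    using assms(6-9) by (simp add: teich_rep_mult X_def Y_def)
  then have XY': "[a * X = b * Y] (mod int p ^ k)"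
    using assms(4,5) by (metis cong_scalar_right cong_sym cong_trans)
  have "[a * b * (A * X * Y) = a * b * (x * Y)] (mod int p ^ k)"
    using assms(1) by (intro cong_scalar_left cong_scalar_right) (simp add: X_def)
  also have "a * b * (x * Y) = (a * x) * (b * Y)"
    by (simp add: ac_simps)
  also have "[(a * x) * (b * Y) = (b * y) * (a * X)] (mod int p ^ k)"
    using xy cong_sym[OF XY'] by (rule cong_mult)
  also have "(b * y) * (a * X) = a * b * (y * X)"
    by (simp add: ac_simps)
  also have "[a * b * (y * X) = a * b * ((B * Y) * X)] (mod int p ^ k)"
    using cong_sym[OF assms(2)] unfolding Y_def[symmetric]
    by (intro cong_scalar_left cong_scalar_right)
  finally have "[(a * b * X * Y) * A = (a * b * X * Y) * B] (mod int p ^ k)"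
    by (simp add: ac_simps)
  moreover have "coprime (a * b * X * Y) (int p ^ k)"
    using assms(6,7) XY by simp
  ultimately show ?thesis
    by (simp add: cong_mult_lcancel)
qed

subsection \<open>The multiplication formula\<close>

definition unit_count :: "nat \<Rightarrow> nat \<Rightarrow> nat" where
  "unit_count p n = (\<Sum>j<n. if p dvd j then 0 else 1)"

lemma ceiling_div_Suc:
  assumes "(p::nat) > 0"
  shows "(Suc n + p - 1) div p = (n + p - 1) div p + (if p dvd n then 1 else 0)"
proof -
  define q where "q = n div p"
  define s where "s = n mod p"
  have n: "n = s + p * q" and "s < p"
    using assms by (simp_all add: q_def s_def)
  show ?thesis
  proof (cases "s = 0")
    case True
    then have "Suc n + p - 1 = 0 + p * (q + 1)" "n + p - 1 = (p - 1) + p * q"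
      using n assms by simp_all
    then show ?thesis
      using True assms by (simp only: div_mult_self2) (simp add: s_def dvd_eq_mod_eq_0)
  next
    case False
    then have "Suc n + p - 1 = s + p * (q + 1)" "n + p - 1 = (s - 1) + p * (q + 1)"
      using n assms by simp_all
    then show ?thesis
      using False \<open>s < p\<close> by (simp only: div_mult_self2) (simp add: s_def dvd_eq_mod_eq_0)
  qed
qed

lemma unit_count_add_ceiling_div:
  assumes "(p::nat) > 0"
  shows "unit_count p n + (n + p - 1) div p = n"
proof (induction n)
  case (Suc n)
  have "unit_count p (Suc n) = unit_count p n + (if p dvd n then 0 else 1)"
    by (simp add: unit_count_def)
  then show ?case
    using Suc ceiling_div_Suc[OF assms, of n] by auto
qed (use assms in \<open>simp add: unit_count_def\<close>)

lemma padic_frac_add_denom: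
  assumes "prime p" "coprime (int N) (int p)"
  shows "padic_frac p (int (n + N)) (int N) m = (padic_frac p (int n) (int N) m + 1) mod int p ^ m"
proof (rule padic_frac_eqI[OF assms])
  have "[int N * ((padic_frac p (int n) (int N) m + 1) mod int p ^ m)
          = int N * padic_frac p (int n) (int N) m + int N] (mod int p ^ m)"
    by (simp add: cong_def mod_mult_right_eq algebra_simps)
  also have "[int N * padic_frac p (int n) (int N) m + int N = int n + int N] (mod int p ^ m)"
    using padic_frac_props(3)[OF assms] by (rule cong_add) simp
  finally show "[int N * ((padic_frac p (int n) (int N) m + 1) mod int p ^ m) = int (n + N)] (mod int p ^ m)"
    by simp
qed (use assms prime_gt_0_nat in auto)

text \<open>Raising \<open>n\<close> by one shifts the window \<open>(n + i)/N\<close>, \<open>i < N\<close>, by one step, and the new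
  point \<open>(n + N)/N\<close> differs from the old point \<open>n/N\<close> by \<open>1\<close>.\<close>

lemma prod_gamma_approx_Suc:
  assumes "prime p" "m \<ge> 1" "coprime (int N) (int p)"
  shows "[(\<Prod>i\<in>{0..<N}. gamma_approx p (int (Suc n + i)) (int N) m)
          = - unit_or_one p (nat (padic_frac p (int n) (int N) m))
              * (\<Prod>i\<in>{0..<N}. gamma_approx p (int (n + i)) (int N) m)] (mod int p ^ (m - 1))"
proof -
  define R where "R a = padic_frac p (int a) (int N) m" for a
  define F where "F n = (\<Prod>i\<in>{0..<N}. gamma_approx p (int (n + i)) (int N) m)" for n
  define \<rho> where "\<rho> = nat (R n)"
  have R_nonneg: "R a \<ge> 0" for a
    using padic_frac_props(1)[OF assms(1,3)] by (simp add: R_def)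
  have F_Suc: "F (Suc n) * gamma_nat p \<rho> = F n * gamma_nat p (nat (R (n + N)))"
  proof -
    have "(\<Prod>i\<in>{0..<Suc N}. gamma_approx p (int (n + i)) (int N) m) = gamma_nat p \<rho> * F (Suc n)"
      by (simp only: prod.atLeast0_lessThan_Suc_shift) (simp add: F_def gamma_approx_def \<rho>_def R_def add_ac)
    moreover have "(\<Prod>i\<in>{0..<Suc N}. gamma_approx p (int (n + i)) (int N) m)
        = F n * gamma_nat p (nat (R (n + N)))"
      by (simp add: F_def gamma_approx_def R_def)
    ultimately show ?thesis
      by (simp add: mult.commute)
  qed
  have "R (n + N) = (R n + 1) mod int p ^ m"
    unfolding R_def by (rule padic_frac_add_denom[OF assms(1,3)])
  then have R_Suc: "[R (n + N) = R n + 1] (mod int p ^ m)"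
    by (simp add: cong_def)
  have eqs: "int (nat (R (n + N))) = R (n + N)" "int (Suc \<rho>) = R n + 1"
      "p ^ Suc (m - 1) = p ^ m"
    using R_nonneg assms(2) by (simp_all add: \<rho>_def)
  have "[int (nat (R (n + N))) = int (Suc \<rho>)] (mod int (p ^ Suc (m - 1)))"
    unfolding eqs of_nat_power by (fact R_Suc)
  then have "[gamma_nat p (nat (R (n + N))) = gamma_nat p (Suc \<rho>)] (mod int p ^ (m - 1))"
    by (rule gamma_nat_cong[OF assms(1) cong_int_iff[THEN iffD1]])
  then have "[F (Suc n) * gamma_nat p \<rho> = F n * gamma_nat p (Suc \<rho>)] (mod int p ^ (m - 1))"
    unfolding F_Suc by (rule cong_scalar_left)
  then have "[F (Suc n) * gamma_nat p \<rho> = (- unit_or_one p \<rho> * F n) * gamma_nat p \<rho>]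
      (mod int p ^ (m - 1))"
    by (simp add: gamma_nat_Suc algebra_simps)
  moreover have "coprime (gamma_nat p \<rho>) (int p ^ (m - 1))"
    using coprime_gamma_nat[OF assms(1)] by simp
  ultimately have "[F (Suc n) = - unit_or_one p \<rho> * F n] (mod int p ^ (m - 1))"
    using cong_mult_rcancel by blast
  then show ?thesis
    by (simp add: F_def \<rho>_def R_def)
qed

lemma unit_or_one_padic_frac:
  assumes "prime p" "m \<ge> 1" "coprime (int N) (int p)"
  shows "[int N ^ (if p dvd n then 0 else 1) * unit_or_one p (nat (padic_frac p (int n) (int N) m))
          = unit_or_one p n] (mod int p ^ m)"
proof -
  define \<rho> where "\<rho> = nat (padic_frac p (int n) (int N) m)"
  have N\<rho>: "[int N * int \<rho> = int n] (mod int p ^ m)"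
    using padic_frac_props[OF assms(1,3), of "int n" m] by (simp add: \<rho>_def)
  moreover have "int p dvd int p ^ m"
    using assms(2) by (simp add: dvd_power)
  ultimately have "[int N * int \<rho> = int n] (mod int p)"
    by (rule cong_dvd_modulus)
  then have "int p dvd int N * int \<rho> \<longleftrightarrow> int p dvd int n"
    by (simp add: cong_dvd_iff)
  then have "p dvd \<rho> \<longleftrightarrow> p dvd n"
    using assms(3) by (simp add: coprime_commute coprime_dvd_mult_right_iff)
  then show ?thesis
    using N\<rho> by (auto simp: unit_or_one_def \<rho>_def)
qed

theorem gamma_approx_mult_formula:
  assumes "prime p" "m \<ge> 1" "coprime (int N) (int p)"
  shows "[int N ^ unit_count p n * (\<Prod>i\<in>{0..<N}. gamma_approx p (int (n + i)) (int N) m)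
          = (\<Prod>i\<in>{0..<N}. gamma_approx p (int i) (int N) m) * gamma_nat p n] (mod int p ^ (m - 1))"
proof (induction n)
  case (Suc n)
  define F where "F n = (\<Prod>i\<in>{0..<N}. gamma_approx p (int (n + i)) (int N) m)" for n
  define e :: nat where "e = (if p dvd n then 0 else 1)"
  define u where "u = unit_or_one p (nat (padic_frac p (int n) (int N) m))"
  have Nu: "[int N ^ e * u = unit_or_one p n] (mod int p ^ (m - 1))"
    using unit_or_one_padic_frac[OF assms, of n] le_imp_power_dvd[of "m - 1" m "int p"]
    by (simp add: e_def u_def cong_dvd_modulus)
  have "int N ^ unit_count p (Suc n) * F (Suc n) = int N ^ unit_count p n * (int N ^ e * F (Suc n))"
    by (simp add: unit_count_def e_def)
  also have "[\<dots> = int N ^ unit_count p n * (int N ^ e * (- u * F n))] (mod int p ^ (m - 1))"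
    using prod_gamma_approx_Suc[OF assms, of n]
    by (intro cong_scalar_left) (simp add: F_def u_def)
  also have "int N ^ unit_count p n * (int N ^ e * (- u * F n))
      = - (int N ^ e * u) * (int N ^ unit_count p n * F n)"
    by (simp add: algebra_simps)
  also have "[\<dots> = - unit_or_one p n * (F 0 * gamma_nat p n)] (mod int p ^ (m - 1))"
    using Suc.IH by (intro cong_mult[OF cong_minus_minus_iff[THEN iffD2, OF Nu]]) (simp add: F_def)
  also have "- unit_or_one p n * (F 0 * gamma_nat p n) = F 0 * gamma_nat p (Suc n)"
    by (simp add: gamma_nat_Suc)
  finally show ?case
    by (simp add: F_def)
qed (simp add: unit_count_def gamma_nat_def)

lemma padic_frac_add_mult_denom:
  assumes "prime p" "coprime (int M) (int p)" "coprime (int N) (int p)"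
  shows "padic_frac p (int (r + i * M)) (int (M * N)) m
       = padic_frac p (int (nat (padic_frac p (int r) (int M) m) + i)) (int N) m"
proof -
  define x where "x = padic_frac p (int r) (int M) m"
  define y where "y = padic_frac p (int (r + i * M)) (int (M * N)) m"
  have x: "0 \<le> x" "[int M * x = int r] (mod int p ^ m)"
    using padic_frac_props[OF assms(1,2)] by (simp_all add: x_def)
  have y: "0 \<le> y" "y < int p ^ m" "[int (M * N) * y = int (r + i * M)] (mod int p ^ m)"
    using padic_frac_props[of p "int (M * N)"] assms by (simp_all add: y_def)
  have "[int M * (int N * y) = int r + int M * int i] (mod int p ^ m)"
    using y(3) by (simp add: algebra_simps)
  also have "[int r + int M * int i = int M * x + int M * int i] (mod int p ^ m)"
    using cong_sym[OF x(2)] by (rule cong_add) simp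
  also have "int M * x + int M * int i = int M * int (nat x + i)"
    using x(1) by (simp add: algebra_simps)
  finally have "[int N * y = int (nat x + i)] (mod int p ^ m)"
    using assms(2) cong_mult_lcancel[of "int M" "int p ^ m"] by simp
  then show ?thesis
    using padic_frac_eqI[OF assms(1,3) y(1,2)] by (simp add: x_def y_def)
qed

corollary gamma_approx_mult_formula_frac:
  assumes "prime p" "m \<ge> 1" "coprime (int M) (int p)" "coprime (int N) (int p)"
  shows "[int N ^ unit_count p (nat (padic_frac p (int r) (int M) m))
            * (\<Prod>i\<in>{0..<N}. gamma_approx p (int (r + i * M)) (int (M * N)) m)
          = (\<Prod>i\<in>{0..<N}. gamma_approx p (int i) (int N) m) * gamma_approx p (int r) (int M) m]
         (mod int p ^ (m - 1))"
  unfolding padic_frac_add_mult_denom[OF assms(1,3,4)] gamma_approx_def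
  using gamma_approx_mult_formula[OF assms(1,2,4), of "nat (padic_frac p (int r) (int M) m)"]
  unfolding gamma_approx_def .

subsection \<open>The reflection formula\<close>

lemma unit_or_one_diff:
  assumes "p dvd L" "i \<le> L"
  shows "\<exists>s. (s = 1 \<or> s = -1) \<and> [unit_or_one p (L - i) = s * unit_or_one p i] (mod int L)"
proof -
  have "p dvd L - i \<longleftrightarrow> p dvd i"
    using assms by (metis diff_diff_cancel dvd_diff_nat)
  show ?thesis
  proof (cases "p dvd i")
    case True
    then show ?thesis
      using \<open>p dvd L - i \<longleftrightarrow> p dvd i\<close> by (intro exI[of _ 1]) (simp add: unit_or_one_def)
  next
    case False
    then have "unit_or_one p (L - i) = int L - int i"
      using \<open>p dvd L - i \<longleftrightarrow> p dvd i\<close> assms(2) by (simp add: unit_or_one_def of_nat_diff)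
    moreover have "[int L - int i = -1 * int i] (mod int L)"
      by (simp add: cong_def)
    ultimately show ?thesis
      using False by (intro exI[of _ "-1"]) (simp add: unit_or_one_def)
  qed
qed

lemma unit_fact_reflection:
  assumes "p dvd L" "1 \<le> a" "a \<le> L"
  shows "\<exists>s. (s = 1 \<or> s = -1) \<and> [unit_fact p a * unit_fact p (L + 1 - a) = s * unit_fact p L] (mod int L)"
proof -
  have "unit_fact p (L + 1 - a) = (\<Prod>j\<in>{1..<L + 1 - a}. unit_or_one p j)"
    using assms(2,3) unfolding unit_fact_def lessThan_atLeast0
    by (simp add: prod.atLeast_Suc_lessThan unit_or_one_def)
  also have "\<dots> = (\<Prod>i\<in>{a..<L}. unit_or_one p (L - i))"
    by (rule prod.reindex_bij_betw[symmetric], rule bij_betw_byWitness[where f' = "\<lambda>j. L - j"])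
      (use assms in auto)
  finally have reflect: "unit_fact p (L + 1 - a) = (\<Prod>i\<in>{a..<L}. unit_or_one p (L - i))" .
  have "\<exists>s. (s = 1 \<or> s = -1) \<and>
      [(\<Prod>i\<in>{a..<L}. unit_or_one p (L - i)) = s * (\<Prod>i\<in>{a..<L}. unit_or_one p i)] (mod int L)"
    by (rule prod_cong_sign) (simp add: unit_or_one_diff[OF assms(1)])
  then obtain s where s: "s = 1 \<or> s = -1"
    "[(\<Prod>i\<in>{a..<L}. unit_or_one p (L - i)) = s * (\<Prod>i\<in>{a..<L}. unit_or_one p i)] (mod int L)"
    by blast
  have "unit_fact p a * (\<Prod>i\<in>{a..<L}. unit_or_one p i) = unit_fact p L"
    unfolding unit_fact_def lessThan_atLeast0 using assms by (intro prod.atLeastLessThan_concat) auto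
  then have "[unit_fact p a * unit_fact p (L + 1 - a) = s * unit_fact p L] (mod int L)"
    unfolding reflect using cong_scalar_left[OF s(2), of "unit_fact p a"] by (simp add: algebra_simps)
  then show ?thesis
    using s(1) by blast
qed

theorem gamma_nat_reflection:
  assumes "prime p" "m \<ge> 1" "1 \<le> a" "a \<le> p ^ m"
  shows "\<exists>s. (s = 1 \<or> s = -1) \<and> [gamma_nat p a * gamma_nat p (p ^ m + 1 - a) = s] (mod int p ^ (m - 1))"
proof -
  define L where "L = p ^ m"
  define c :: int where "c = (if p = 2 then 1 else -1)"
  obtain s where s: "s = 1 \<or> s = -1"
    "[unit_fact p a * unit_fact p (L + 1 - a) = s * unit_fact p L] (mod int L)"
    using unit_fact_reflection[of p L a] assms by (auto simp: L_def dvd_power)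
  have "[unit_fact p a * unit_fact p (L + 1 - a) = s * unit_fact p L] (mod int p ^ (m - 1))"
    using s(2) le_imp_power_dvd[of "m - 1" m "int p"] by (simp add: L_def cong_dvd_modulus)
  also have "[s * unit_fact p L = s * c] (mod int p ^ (m - 1))"
    using unit_fact_prime_power[OF assms(1), of "m - 1"] assms(2)
    by (intro cong_scalar_left) (simp add: L_def c_def)
  finally have "[(-1) ^ (L + 1) * (unit_fact p a * unit_fact p (L + 1 - a)) = (-1) ^ (L + 1) * (s * c)]
      (mod int p ^ (m - 1))"
    by (rule cong_scalar_left)
  moreover have "gamma_nat p a * gamma_nat p (L + 1 - a)
      = (-1) ^ (a + (L + 1 - a)) * (unit_fact p a * unit_fact p (L + 1 - a))"
    by (simp only: gamma_nat_eq_unit_fact power_add mult_ac)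
  moreover have "a + (L + 1 - a) = L + 1"
    using assms(4) by (simp add: L_def)
  moreover have "(-1::int) ^ (L + 1) * (s * c) = 1 \<or> (-1::int) ^ (L + 1) * (s * c) = -1"
    using s(1) by (cases "even (L + 1)") (auto simp: c_def)
  ultimately show ?thesis
    unfolding L_def by (metis (no_types, lifting))
qed

lemma padic_frac_complement:
  assumes "prime p" "coprime (int N) (int p)" "0 < x" "x < N" "N < p ^ m"
  defines "a \<equiv> \<lambda>x. nat (padic_frac p (int x) (int N) m)"
  shows "a (N - x) = p ^ m + 1 - a x" "1 \<le> a x" "a x \<le> p ^ m"
proof -
  define L where "L = p ^ m"
  define al where "al x = padic_frac p (int x) (int N) m" for x
  have al: "0 \<le> al x" "al x < int L" "[int N * al x = int x] (mod int L)" for x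
    using padic_frac_props[OF assms(1,2)] by (simp_all add: al_def L_def)
  have al_pos: "al y \<ge> 1" if "0 < y" "y < N" for y
  proof (rule ccontr)
    assume "\<not> al y \<ge> 1"
    then have "al y = 0"
      using al(1)[of y] by simp
    then have "[int y = 0] (mod int L)"
      using al(3)[of y] by (metis cong_sym mult_zero_right)
    then have "L \<le> y"
      using that by (intro dvd_imp_le) (simp_all add: cong_0_iff)
    then show False
      using that assms(5) L_def by linarith
  qed
  have "[int N * (al x + al (N - x)) = int N * 1] (mod int L)"
    using cong_add[OF al(3)[of x] al(3)[of "N - x"]] assms(4) by (simp add: algebra_simps)
  moreover have "coprime (int N) (int L)"
    using assms(2) by (simp add: L_def)
  ultimately have "[al x + al (N - x) = 1] (mod int L)"
    using cong_mult_lcancel by blast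
  then obtain t where t: "al x + al (N - x) - 1 = int L * t"
    by (metis cong_iff_dvd_diff dvdE)
  have "1 \<le> al x" "1 \<le> al (N - x)"
    using al_pos assms(3,4) by simp_all
  then have "0 < int L * t" "int L * t < int L * 2"
    using t al(2)[of x] al(2)[of "N - x"] by linarith+
  then have "t = 1"
    by (simp add: zero_less_mult_iff mult_less_cancel_left)
  then have "al x + al (N - x) = int L + 1"
    using t by simp
  moreover have "int (a y) = al y" for y
    using al(1)[of y] by (simp add: a_def al_def)
  ultimately have "int (a x + a (N - x)) = int (p ^ m + 1)"
    by (simp add: L_def)
  then have "a x + a (N - x) = p ^ m + 1"
    by (simp only: of_nat_eq_iff)
  moreover have "1 \<le> a x" "1 \<le> a (N - x)"
    using \<open>1 \<le> al x\<close> \<open>1 \<le> al (N - x)\<close> by (simp_all add: a_def al_def)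
  ultimately show "a (N - x) = p ^ m + 1 - a x" "1 \<le> a x" "a x \<le> p ^ m"
    by simp_all
qed

theorem prod_gamma_approx_square:
  assumes "prime p" "m \<ge> 1" "coprime (int N) (int p)" "N < p ^ m"
  shows "\<exists>s. (s = 1 \<or> s = -1) \<and>
     [(\<Prod>i\<in>{0..<N}. gamma_approx p (int i) (int N) m) ^ 2 = s] (mod int p ^ (m - 1))"
proof (cases "N = 0")
  case False
  define a where "a x = nat (padic_frac p (int x) (int N) m)" for x
  define G where "G x = gamma_nat p (a x)" for x
  have "a 0 = 0"
    using padic_frac_eqI[OF assms(1,3), of 0 m 0] prime_gt_0_nat[OF assms(1)] by (simp add: a_def)
  then have "(\<Prod>i\<in>{0..<N}. G i) = (\<Prod>i\<in>{1..<N}. G i)"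
    using False by (simp add: prod.atLeast_Suc_lessThan G_def gamma_nat_def)
  moreover have "(\<Prod>i\<in>{1..<N}. G (N - i)) = (\<Prod>i\<in>{1..<N}. G i)"
    by (rule prod.reindex_bij_betw, rule bij_betw_byWitness[where f' = "\<lambda>i. N - i"]) auto
  ultimately have "(\<Prod>i\<in>{0..<N}. G i) ^ 2 = (\<Prod>i\<in>{1..<N}. G i * G (N - i))"
    by (simp add: power2_eq_square prod.distrib)
  moreover have "\<exists>s. (s = 1 \<or> s = -1) \<and>
      [(\<Prod>i\<in>{1..<N}. G i * G (N - i)) = s * (\<Prod>i\<in>{1..<N}. 1)] (mod int p ^ (m - 1))"
  proof (rule prod_cong_sign)
    fix x
    assume "x \<in> {1..<N}"
    then have x: "0 < x" "x < N"
      by auto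
    obtain s where "s = 1 \<or> s = -1"
      "[gamma_nat p (a x) * gamma_nat p (p ^ m + 1 - a x) = s] (mod int p ^ (m - 1))"
      using gamma_nat_reflection[OF assms(1,2)] padic_frac_complement[OF assms(1,3) x assms(4)]
      unfolding a_def by blast
    then show "\<exists>s. (s = 1 \<or> s = -1) \<and> [G x * G (N - x) = s * 1] (mod int p ^ (m - 1))"
      using padic_frac_complement[OF assms(1,3) x assms(4)] by (auto simp: G_def a_def)
  qed
  ultimately show ?thesis
    by (simp add: G_def a_def gamma_approx_def)
qed (auto intro: exI[of _ 1] simp: cong_def)

subsection \<open>Orbits of \<open>x \<mapsto> p x\<close> in \<open>\<int>/M\<close>\<close>

lemma ceiling_div_prime_cong:
  fixes n0 n1 e :: int
  assumes "p > 0" "m \<ge> 1" "- int p < e" "e \<le> 0" "[n1 = int p * n0 + e] (mod int p ^ m)"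
  shows "[(n1 + int p - 1) div int p = n0] (mod int p ^ (m - 1))"
proof -
  define c where "c = (n1 + int p - 1) div int p"
  define \<delta> where "\<delta> = int p * c - n1"
  have "n1 + int p - 1 = int p * c + (n1 + int p - 1) mod int p"
    by (simp add: c_def)
  moreover have "0 \<le> (n1 + int p - 1) mod int p" "(n1 + int p - 1) mod int p < int p"
    using assms(1) by simp_all
  ultimately have \<delta>: "0 \<le> \<delta>" "\<delta> < int p"
    unfolding \<delta>_def by linarith+
  have pc: "[int p * c = int p * n0 + (e + \<delta>)] (mod int p ^ m)"
    using cong_add[OF assms(5) cong_refl[of \<delta>]] by (simp add: \<delta>_def algebra_simps)
  have "e + \<delta> = 0"
  proof (rule ccontr)
    assume "e + \<delta> \<noteq> 0"
    have "int p dvd int p ^ m"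
      using assms(2) by (cases m) simp_all
    then have "[int p * c = int p * n0 + (e + \<delta>)] (mod int p)"
      using pc cong_dvd_modulus by blast
    then have "int p dvd int p * n0 + (e + \<delta>)"
      using cong_dvd_iff by (metis dvd_triv_left)
    then have "int p dvd e + \<delta>"
      by (simp add: dvd_add_right_iff)
    then have "\<bar>int p\<bar> \<le> \<bar>e + \<delta>\<bar>"
      by (rule dvd_imp_le_int[OF \<open>e + \<delta> \<noteq> 0\<close>])
    then show False
      using \<delta> assms(3,4) by linarith
  qed
  then have "[int p * c = int p * n0] (mod int p * int p ^ (m - 1))"
    using pc assms(2) by (simp flip: power_Suc)
  then show ?thesis
    using assms(1) by (simp add: c_def cong_mult_lcancel cong_iff_dvd_diff
      flip: right_diff_distrib)
qed

lemma padic_frac_times_prime: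
  assumes "prime p" "coprime (int M) (int p)" "r0 < M" "r1 < M"
    and "[int r1 = int p * int r0] (mod int M)"
  obtains e where "- int p < e" "e \<le> 0"
    "[padic_frac p (int r1) (int M) m = int p * padic_frac p (int r0) (int M) m + e] (mod int p ^ m)"
proof -
  define n0 where "n0 = padic_frac p (int r0) (int M) m"
  define n1 where "n1 = padic_frac p (int r1) (int M) m"
  obtain e where e: "int r1 - int p * int r0 = int M * e"
    using assms(5) by (metis cong_iff_dvd_diff dvdE)
  have "0 \<le> int p * int r0"
    by simp
  then have "int M * e < int M * 1"
    using e assms(4) by linarith
  then have "e < 1"
    by (rule mult_left_less_imp_less) simp
  then have "e \<le> 0"
    by simp
  have "int p * int r0 < int p * int M"
    using assms(3) prime_gt_0_nat[OF assms(1)] by simp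
  then have "int M * (- int p) < int M * e"
    using e by (simp add: algebra_simps)
  then have "- int p < e"
    by (rule mult_left_less_imp_less) simp
  have "[int M * n1 = int r1] (mod int p ^ m)"
    using padic_frac_props(3)[OF assms(1,2)] by (simp add: n1_def)
  also have "int r1 = int p * int r0 + int M * e"
    using e by simp
  also have "[int p * int r0 + int M * e = int p * (int M * n0) + int M * e] (mod int p ^ m)"
    using padic_frac_props(3)[OF assms(1,2)] by (intro cong_add cong_scalar_left) (simp_all add: n0_def cong_sym)
  also have "int p * (int M * n0) + int M * e = int M * (int p * n0 + e)"
    by (simp add: algebra_simps)
  finally have "[n1 = int p * n0 + e] (mod int p ^ m)"
    using assms(2) cong_mult_lcancel[of "int M" "int p ^ m"] by simp
  then show ?thesis
    using that \<open>- int p < e\<close> \<open>e \<le> 0\<close> by (simp add: n0_def n1_def)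
qed

theorem prime_power_dvd_orbit_unit_count:
  assumes "prime p" "m \<ge> 1" "coprime M p" "M > 1"
  shows "int p ^ (m - 1) dvd
    int (\<Sum>j\<in>{0..<ord M p}. unit_count p (nat (padic_frac p (int ((p ^ j * d) mod M)) (int M) m)))"
proof -
  define \<nu> where "\<nu> = ord M p"
  define r where "r j = (p ^ j * d) mod M" for j
  define n where "n j = padic_frac p (int (r j)) (int M) m" for j
  define c where "c j = (n j + int p - 1) div int p" for j
  define pred where "pred j = (if j = 0 then \<nu> - 1 else j - 1)" for j
  have \<nu>: "\<nu> > 0" "[p ^ \<nu> = 1] (mod M)"
    using coprime_ord[OF assms(3)] by (simp_all add: \<nu>_def)
  have cM: "coprime (int M) (int p)"
    using assms(3) by simp
  have p0: "p > 0"
    using prime_gt_0_nat[OF assms(1)] .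
  have n_nonneg: "n j \<ge> 0" for j
    using padic_frac_props(1)[OF assms(1) cM] by (simp add: n_def)
  have unit_count: "int (unit_count p (nat (n j))) = n j - c j" for j
  proof -
    have "int (unit_count p (nat (n j)) + (nat (n j) + p - 1) div p) = int (nat (n j))"
      using unit_count_add_ceiling_div[OF p0, of "nat (n j)"] by (rule arg_cong)
    moreover have "int ((nat (n j) + p - 1) div p) = int (nat (n j) + p - 1) div int p"
      by (rule zdiv_int)
    moreover have "int (nat (n j) + p - 1) = n j + int p - 1"
      using n_nonneg[of j] p0 by (simp add: of_nat_diff)
    ultimately show ?thesis
      using n_nonneg[of j] by (simp add: c_def)
  qed
  have "[c j = n (pred j)] (mod int p ^ (m - 1))" if "j < \<nu>" for j
  proof -
    have "p * p ^ pred j = (if j = 0 then p ^ \<nu> else p ^ j)"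
      using \<nu>(1) by (simp add: pred_def flip: power_Suc)
    then have "[p * p ^ pred j = p ^ j] (mod M)"
      using \<nu>(2) by simp
    then have "[p * p ^ pred j * d = p ^ j * d] (mod M)"
      by (rule cong_scalar_right)
    moreover have "[p * r (pred j) = p * p ^ pred j * d] (mod M)"
      by (simp add: r_def cong_def mod_mult_right_eq mult.assoc)
    moreover have "[p ^ j * d = r j] (mod M)"
      by (simp add: r_def cong_def)
    ultimately have "[int (p * r (pred j)) = int (r j)] (mod int M)"
      unfolding cong_int_iff by (meson cong_trans)
    then have "[int (r j) = int p * int (r (pred j))] (mod int M)"
      by (simp add: cong_sym_eq)
    moreover have "r j < M" "r (pred j) < M"
      using assms(4) by (simp_all add: r_def)
    ultimately obtain e where "- int p < e" "e \<le> 0" "[n j = int p * n (pred j) + e] (mod int p ^ m)"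
      using padic_frac_times_prime[OF assms(1) cM] unfolding n_def by blast
    then show ?thesis
      unfolding c_def by (rule ceiling_div_prime_cong[OF p0 assms(2)])
  qed
  then have "int p ^ (m - 1) dvd (\<Sum>j\<in>{0..<\<nu>}. c j - n (pred j))"
    by (intro dvd_sum) (simp add: cong_iff_dvd_diff)
  moreover have "(\<Sum>j\<in>{0..<\<nu>}. n (pred j)) = (\<Sum>j\<in>{0..<\<nu>}. n j)"
    by (rule sum.reindex_bij_betw, rule bij_betw_byWitness[where f' = "\<lambda>j. if j = \<nu> - 1 then 0 else j + 1"])
      (use \<nu>(1) in \<open>auto simp: pred_def\<close>)
  ultimately have "int p ^ (m - 1) dvd (\<Sum>j\<in>{0..<\<nu>}. n j - c j)"
    by (simp add: sum_subtractf dvd_diff_commute)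
  moreover have "int (\<Sum>j\<in>{0..<\<nu>}. unit_count p (nat (n j))) = (\<Sum>j\<in>{0..<\<nu>}. n j - c j)"
    by (simp add: unit_count)
  ultimately have "int p ^ (m - 1) dvd int (\<Sum>j\<in>{0..<\<nu>}. unit_count p (nat (n j)))"
    by simp
  then show ?thesis
    by (simp only: n_def r_def \<nu>_def)
qed

lemma padic_prod_padic_prod:
  "padic_prod p (\<lambda>j. padic_prod p (f j) B) A k = (\<Prod>j\<in>A. \<Prod>i\<in>B. f j i k) mod int p ^ k"
  by (simp add: padic_prod_def mod_prod_eq)

corollary prod_gamma_approx_mult_formula:
  assumes "prime p" "m \<ge> 1" "coprime (int M) (int p)" "coprime (int N) (int p)"
  shows "[int N ^ (\<Sum>j\<in>J. unit_count p (nat (padic_frac p (int (r j)) (int M) m)))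
            * (\<Prod>j\<in>J. \<Prod>i\<in>{0..<N}. gamma_approx p (int (r j + i * M)) (int (M * N)) m)
          = (\<Prod>i\<in>{0..<N}. gamma_approx p (int i) (int N) m) ^ card J
            * (\<Prod>j\<in>J. gamma_approx p (int (r j)) (int M) m)] (mod int p ^ (m - 1))"
proof -
  have "[(\<Prod>j\<in>J. int N ^ unit_count p (nat (padic_frac p (int (r j)) (int M) m))
            * (\<Prod>i\<in>{0..<N}. gamma_approx p (int (r j + i * M)) (int (M * N)) m))
      = (\<Prod>j\<in>J. (\<Prod>i\<in>{0..<N}. gamma_approx p (int i) (int N) m)
            * gamma_approx p (int (r j)) (int M) m)] (mod int p ^ (m - 1))"
    by (rule cong_prod) (rule gamma_approx_mult_formula_frac[OF assms])
  then show ?thesis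
    by (simp add: prod.distrib power_sum)
qed

lemma less_prime_power_self: "prime p \<Longrightarrow> N < p ^ N"
  by (metis less_exp order_less_le_trans power_mono prime_ge_2_nat zero_le_numeral)

lemma teich_rep_fixed_orbit_power:
  assumes "prime p" "M > 1" "coprime M p" "coprime (int N) (int p)" "k \<ge> 1" "k < m"
  shows "[teich_rep p k (int N ^ (\<Sum>j\<in>{0..<ord M p}.
            unit_count p (nat (padic_frac p (int ((p ^ j * d) mod M)) (int M) m))))
          = int N ^ (\<Sum>j\<in>{0..<ord M p}.
            unit_count p (nat (padic_frac p (int ((p ^ j * d) mod M)) (int M) m)))] (mod int p ^ k)"
proof (rule teich_rep_power_fixed[OF assms(1,5,4)])
  have "p ^ k dvd p ^ (m - 1)"
    using assms(6) by (simp add: le_imp_power_dvd)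
  moreover have "int p ^ (m - 1) dvd int (\<Sum>j\<in>{0..<ord M p}.
      unit_count p (nat (padic_frac p (int ((p ^ j * d) mod M)) (int M) m)))"
    using prime_power_dvd_orbit_unit_count[OF assms(1) _ assms(3,2)] assms(5,6) by simp
  then have "p ^ (m - 1) dvd (\<Sum>j\<in>{0..<ord M p}.
      unit_count p (nat (padic_frac p (int ((p ^ j * d) mod M)) (int M) m)))"
    by (simp only: of_nat_power[symmetric] of_nat_dvd_iff)
  ultimately show "p ^ k dvd (\<Sum>j\<in>{0..<ord M p}.
      unit_count p (nat (padic_frac p (int ((p ^ j * d) mod M)) (int M) m)))"
    by (rule dvd_trans)
qed

lemma teich_rep_fixed_prod_gamma_approx_power:
  assumes "prime p" "coprime (int N) (int p)" "k \<ge> 1" "k + 2 \<le> m" "N < p ^ m"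
  shows "[teich_rep p k ((\<Prod>i\<in>{0..<N}. gamma_approx p (int i) (int N) m) ^ n)
          = (\<Prod>i\<in>{0..<N}. gamma_approx p (int i) (int N) m) ^ n] (mod int p ^ k)"
proof -
  define \<epsilon> where "\<epsilon> = (\<Prod>i\<in>{0..<N}. gamma_approx p (int i) (int N) m)"
  have \<epsilon>: "coprime \<epsilon> (int p)"
    by (simp add: \<epsilon>_def prod_coprime_left coprime_gamma_approx assms(1))
  have "m \<ge> 1"
    using assms(4) by simp
  then obtain s where "s = 1 \<or> s = -1" "[\<epsilon> ^ 2 = s] (mod int p ^ (m - 1))"
    using prod_gamma_approx_square[OF assms(1) _ assms(2,5)] unfolding \<epsilon>_def by blast
  moreover have "int p ^ Suc k dvd int p ^ (m - 1)"
    using assms(4) by (simp add: le_imp_power_dvd del: power_Suc)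
  ultimately have "[teich_rep p k \<epsilon> = \<epsilon>] (mod int p ^ k)"
    using teich_rep_fixed_of_square[OF assms(1,3) \<epsilon>] cong_dvd_modulus by blast
  then show ?thesis
    using \<epsilon> by (simp add: teich_rep_power cong_pow \<epsilon>_def)
qed

lemma orbit_padic_angle_cong:
  fixes p M N d k :: nat
  assumes "prime p" "M > 1" "coprime M p" "coprime N p" "k \<ge> 1"
  defines "r \<equiv> \<lambda>j. (p ^ j * d) mod M"
  shows "[(\<Prod>j\<in>{0..<ord M p}. \<Prod>i\<in>{0..<N}.
            padic_angle p (padic_gamma p (padic_frac p (int (r j + i * M)) (int (M * N)))) k)
        = (\<Prod>j\<in>{0..<ord M p}. padic_angle p (padic_gamma p (padic_frac p (int (r j)) (int M))) k)]
        (mod int p ^ k)"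
proof -
  define J where "J = {0..<ord M p}"
  define m where "m = k + 3 + N"
  define z where "z j i = gamma_approx p (int (r j + i * M)) (int (M * N)) m" for j i
  define w where "w j = gamma_approx p (int (r j)) (int M) m" for j
  define \<epsilon> where "\<epsilon> = (\<Prod>i\<in>{0..<N}. gamma_approx p (int i) (int N) m)"
  define U where "U = (\<Sum>j\<in>J. unit_count p (nat (padic_frac p (int (r j)) (int M) m)))"
  have cop: "coprime (int M) (int p)" "coprime (int N) (int p)" "coprime (int (M * N)) (int p)"
    using assms(3,4) by simp_all
  have m: "k + 2 \<le> m" "k + 2 \<le> m - 1" "N < p ^ m"
    using less_prime_power_self[OF assms(1), of N] power_increasing[of N m p] prime_gt_0_nat[OF assms(1)]
    by (simp_all add: m_def)
  have "[(\<Prod>j\<in>J. \<Prod>i\<in>{0..<N}. padic_angle p (padic_gamma p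
            (padic_frac p (int (r j + i * M)) (int (M * N)))) k)
        * teich_rep p k (\<Prod>j\<in>J. \<Prod>i\<in>{0..<N}. z j i) = (\<Prod>j\<in>J. \<Prod>i\<in>{0..<N}. z j i)] (mod int p ^ k)"
    unfolding z_def using assms(1,5) cop(3) m(1)
    by (intro prod_teich_rep_quotient padic_angle_gamma_approx prod_coprime_left coprime_gamma_approx)
  moreover have "[(\<Prod>j\<in>J. padic_angle p (padic_gamma p (padic_frac p (int (r j)) (int M))) k)
        * teich_rep p k (\<Prod>j\<in>J. w j) = (\<Prod>j\<in>J. w j)] (mod int p ^ k)"
    unfolding w_def using assms(1,5) cop(1) m(1)
    by (intro prod_teich_rep_quotient padic_angle_gamma_approx coprime_gamma_approx)
  moreover have "[int N ^ U * (\<Prod>j\<in>J. \<Prod>i\<in>{0..<N}. z j i) = \<epsilon> ^ card J * (\<Prod>j\<in>J. w j)]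
      (mod int p ^ (k + 2))"
    using cong_dvd_modulus[OF prod_gamma_approx_mult_formula[OF assms(1) _ cop(1,2)]
        le_imp_power_dvd[OF m(2)]] m(1)
    unfolding U_def z_def w_def \<epsilon>_def by simp
  moreover have "[teich_rep p k (int N ^ U) = int N ^ U] (mod int p ^ k)"
    using teich_rep_fixed_orbit_power[OF assms(1-3) cop(2) assms(5)] m(1)
    by (simp add: U_def J_def r_def)
  moreover have "[teich_rep p k (\<epsilon> ^ card J) = \<epsilon> ^ card J] (mod int p ^ k)"
    unfolding \<epsilon>_def using teich_rep_fixed_prod_gamma_approx_power[OF assms(1) cop(2) assms(5) m(1,3)] .
  ultimately show ?thesis
    unfolding J_def[symmetric] by (rule angle_eq_of_cong)
      (use cop in \<open>simp_all add: \<epsilon>_def z_def w_def prod_coprime_left coprime_gamma_approx assms(1)\<close>)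
qed

theorem mainTheorem14:
  fixes p M N d :: nat
  assumes "prime p" and "M > 1" and "coprime M p"
    and "N > 1" and "coprime N (p * M)"
    and "d < M" and "coprime d M"
  shows "padic_prod p
           (\<lambda>j. padic_prod p
              (\<lambda>k. padic_angle p (padic_gamma p
                 (padic_frac p (int ((p ^ j * d) mod M + k * M)) (int (M * N))))) {0..<N})
           {0..<ord M p}
       = padic_prod p
           (\<lambda>j. padic_angle p (padic_gamma p
              (padic_frac p (int ((p ^ j * d) mod M)) (int M))))
           {0..<ord M p}"
proof (rule ext)
  fix k
  have "[(\<Prod>j\<in>{0..<ord M p}. \<Prod>i\<in>{0..<N}. padic_angle p (padic_gamma p
            (padic_frac p (int ((p ^ j * d) mod M + i * M)) (int (M * N)))) k)
       = (\<Prod>j\<in>{0..<ord M p}. padic_angle p (padic_gamma p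
            (padic_frac p (int ((p ^ j * d) mod M)) (int M))) k)] (mod int p ^ k)"
  proof (cases "k = 0")
    case False
    moreover have "coprime N p"
      using assms(5) by simp
    ultimately show ?thesis
      using orbit_padic_angle_cong[OF assms(1-3), of N k d] by simp
  qed (simp add: cong_def)
  then show "padic_prod p (\<lambda>j. padic_prod p (\<lambda>k. padic_angle p (padic_gamma p
                 (padic_frac p (int ((p ^ j * d) mod M + k * M)) (int (M * N))))) {0..<N}) {0..<ord M p} k
       = padic_prod p (\<lambda>j. padic_angle p (padic_gamma p
              (padic_frac p (int ((p ^ j * d) mod M)) (int M)))) {0..<ord M p} k"
    unfolding padic_prod_padic_prod by (simp add: padic_prod_def cong_def)
qed

end
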